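(* Let $A_\star,\hat A\in\mathbb{R}^{n\times n}$, $B_\star,\hat B\in\mathbb{R}^{n\times m}$. For any $P_1,P_2\in\mathbb{S}^n_+$ and any integer $i\ge0$, define $\hat P_{(i)}=\mathcal{R}^{(i)}_{\hat A,\hat B}(P_1)$ and $P_{(i)}=\mathcal{R}^{(i)}_{A_\star,B_\star}(P_2)$. Then $$\hat P_{(i)}-P_{(i)}=\big[\Phi^{(0:i)}_{\hat A,\hat B}(P_1)\big]^\top(P_1-P_2)\,\bar\Phi^{(0:i)}(P_2)+\sum_{j=1}^{i}\big[\Phi^{(i-j+1:i)}_{\hat A,\hat B}(P_1)\big]^\top\mathcal{M}\big(\hat P_{(i-j)},P_{(i-j)}\big)\,\bar\Phi^{(i-j+1:i)}(P_2),$$ where for $P_1,P_2\in\mathbb{S}^n_+$, $$\mathcal{M}(P_1,P_2)=\hat A^\top P_2(I+S_{B_\star}P_2)^{-1}\hat A-A_\star^\top P_2(I+S_{B_\star}P_2)^{-1}A_\star+\hat A^\top(I+P_1S_{\hat B})^{-1}P_2(S_{B_\star}-S_{\hat B})P_2(I+S_{B_\star}P_2)^{-1}\hat A.$$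
   Context: $R\in\mathbb{S}^m_{++}$, $Q\in\mathbb{S}^n_+$. $S_B=BR^{-1}B^\top$. Riccati map $\mathcal{R}_{A,B}(P)=A^\top P(I+S_BP)^{-1}A+Q$ on $\mathbb{S}^n_+$, iterates $\mathcal{R}^{(0)}_{A,B}=\mathrm{id}$, $\mathcal{R}^{(i+1)}_{A,B}=\mathcal{R}_{A,B}\circ\mathcal{R}^{(i)}_{A,B}$. $\mathcal{K}_{A,B}(F)=(R+B^\top FB)^{-1}B^\top FA$ and $\mathcal{L}_{A,B}(P)=(I+S_BP)^{-1}A=A-B\mathcal{K}_{A,B}(P)$. For integers $0\le j\le i$: $\Phi^{(j:i)}_{A,B}(P)=\mathcal{L}_{A,B}(\mathcal{R}^{(j)}_{A,B}(P))\cdots\mathcal{L}_{A,B}(\mathcal{R}^{(i-1)}_{A,B}(P))$ if $i>j$, and $=I$ if $i=j$. Define $\mathcal{W}(P)=I+(S_{B_\star}-S_{\hat B})P$, $\mathcal{H}(P)=(I+S_{B_\star}P)^{-1}(\hat A-A_\star)$, $\bar{\mathcal{L}}(P)=\mathcal{W}(P)[\mathcal{H}(P)+\mathcal{L}_{A_\star,B_\star}(P)]$, and $\bar\Phi^{(j:i)}(P)=\bar{\mathcal{L}}(\mathcal{R}^{(j)}_{A_\star,B_\star}(P))\cdots\bar{\mathcal{L}}(\mathcal{R}^{(i-1)}_{A_\star,B_\star}(P))$ if $i>j$, and $=I$ if $i=j$. *)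

theory Defs
  imports "HOL-Analysis.Analysis"
begin

(* Matrices: real^'c^'r is an 'r x 'c matrix; n = CARD('n), m = CARD('m). *)

definition psd :: "real^'n^'n \<Rightarrow> bool" where
  "psd P \<longleftrightarrow> transpose P = P \<and> (\<forall>x. 0 \<le> x \<bullet> (P *v x))"

definition pd :: "real^'n^'n \<Rightarrow> bool" where
  "pd P \<longleftrightarrow> transpose P = P \<and> (\<forall>x. x \<noteq> 0 \<longrightarrow> 0 < x \<bullet> (P *v x))"

definition SB :: "real^'m^'m \<Rightarrow> real^'m^'n \<Rightarrow> real^'n^'n" where
  "SB R B = B ** matrix_inv R ** transpose B"

definition ric :: "real^'m^'m \<Rightarrow> real^'n^'n \<Rightarrow> real^'n^'n \<Rightarrow> real^'m^'n \<Rightarrow> real^'n^'n \<Rightarrow> real^'n^'n" where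
  "ric R Q A B P = transpose A ** P ** matrix_inv (mat 1 + SB R B ** P) ** A + Q"

definition ric_iter :: "real^'m^'m \<Rightarrow> real^'n^'n \<Rightarrow> real^'n^'n \<Rightarrow> real^'m^'n \<Rightarrow> nat \<Rightarrow> real^'n^'n \<Rightarrow> real^'n^'n" where
  "ric_iter R Q A B i = (ric R Q A B ^^ i)"

definition Kgain :: "real^'m^'m \<Rightarrow> real^'n^'n \<Rightarrow> real^'m^'n \<Rightarrow> real^'n^'n \<Rightarrow> real^'n^'m" where
  "Kgain R A B F = matrix_inv (R + transpose B ** F ** B) ** transpose B ** F ** A"

definition Lcl :: "real^'m^'m \<Rightarrow> real^'n^'n \<Rightarrow> real^'m^'n \<Rightarrow> real^'n^'n \<Rightarrow> real^'n^'n" where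
  "Lcl R A B P = matrix_inv (mat 1 + SB R B ** P) ** A"

(* ordered product M_j ** M_{j+1} ** ... ** M_{i-1}; identity if i <= j *)
definition mprod :: "(nat \<Rightarrow> real^'n^'n) \<Rightarrow> nat \<Rightarrow> nat \<Rightarrow> real^'n^'n" where
  "mprod f j i = foldr (\<lambda>k M. f k ** M) [j..<i] (mat 1)"

definition Phi :: "real^'m^'m \<Rightarrow> real^'n^'n \<Rightarrow> real^'n^'n \<Rightarrow> real^'m^'n \<Rightarrow> nat \<Rightarrow> nat \<Rightarrow> real^'n^'n \<Rightarrow> real^'n^'n" where
  "Phi R Q A B j i P = mprod (\<lambda>k. Lcl R A B (ric_iter R Q A B k P)) j i"

definition Wm :: "real^'m^'m \<Rightarrow> real^'m^'n \<Rightarrow> real^'m^'n \<Rightarrow> real^'n^'n \<Rightarrow> real^'n^'n" where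
  "Wm R Bs Bh P = mat 1 + (SB R Bs - SB R Bh) ** P"

definition Hm :: "real^'m^'m \<Rightarrow> real^'n^'n \<Rightarrow> real^'m^'n \<Rightarrow> real^'n^'n \<Rightarrow> real^'n^'n \<Rightarrow> real^'n^'n" where
  "Hm R As Bs Ah P = matrix_inv (mat 1 + SB R Bs ** P) ** (Ah - As)"

definition Lbar :: "real^'m^'m \<Rightarrow> real^'n^'n \<Rightarrow> real^'m^'n \<Rightarrow> real^'n^'n \<Rightarrow> real^'m^'n \<Rightarrow> real^'n^'n \<Rightarrow> real^'n^'n" where
  "Lbar R As Bs Ah Bh P = Wm R Bs Bh P ** (Hm R As Bs Ah P + Lcl R As Bs P)"

definition Phibar :: "real^'m^'m \<Rightarrow> real^'n^'n \<Rightarrow> real^'n^'n \<Rightarrow> real^'m^'n \<Rightarrow> real^'n^'n \<Rightarrow> real^'m^'n \<Rightarrow> nat \<Rightarrow> nat \<Rightarrow> real^'n^'n \<Rightarrow> real^'n^'n" where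
  "Phibar R Q As Bs Ah Bh j i P = mprod (\<lambda>k. Lbar R As Bs Ah Bh (ric_iter R Q As Bs k P)) j i"

definition Mm :: "real^'m^'m \<Rightarrow> real^'n^'n \<Rightarrow> real^'m^'n \<Rightarrow> real^'n^'n \<Rightarrow> real^'m^'n \<Rightarrow> real^'n^'n \<Rightarrow> real^'n^'n \<Rightarrow> real^'n^'n" where
  "Mm R As Bs Ah Bh P1 P2 =
     transpose Ah ** P2 ** matrix_inv (mat 1 + SB R Bs ** P2) ** Ah
   - transpose As ** P2 ** matrix_inv (mat 1 + SB R Bs ** P2) ** As
   + transpose Ah ** matrix_inv (mat 1 + P1 ** SB R Bh) ** P2 ** (SB R Bs - SB R Bh) ** P2
       ** matrix_inv (mat 1 + SB R Bs ** P2) ** Ah"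

end

theory Submission imports Defs begin

text \<open>
  Write \<open>P\<^sub>k\<close> and \<open>P\<^sub>k'\<close> for the iterates of the two Riccati maps.  Since both maps
  share \<open>Q\<close>, one step satisfies
  \<open>P\<^sub>k\<^sub>+\<^sub>1' - P\<^sub>k\<^sub>+\<^sub>1 = L(P\<^sub>k')\<^sup>T (P\<^sub>k' - P\<^sub>k) Lbar(P\<^sub>k) + M(P\<^sub>k', P\<^sub>k)\<close>.
  This is a purely algebraic identity once \<open>P (I + S P)\<^sup>-\<^sup>1\<close> is rewritten as \<open>(I + P S)\<^sup>-\<^sup>1 P\<close>
  and \<open>H(P) + L(P)\<close> is collapsed to \<open>(I + S\<^sub>\<star> P)\<^sup>-\<^sup>1 A'\<close>.  Unrolling this linear recursion
  for the differences gives the closed form.  The Riccati map preserves positive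
  semidefiniteness, and \<open>I + S P\<close> is invertible for positive semidefinite \<open>S, P\<close>, so every
  \<open>matrix_inv\<close> that occurs is a genuine inverse.
\<close>

lemma matrix_add_rdistrib: "((A::real^'n^'m) + B) ** (C::real^'p^'n) = A ** C + B ** C"
  by (vector matrix_matrix_mult_def sum.distrib[symmetric] field_simps)

lemma matrix_diff_ldistrib: "(A::real^'n^'m) ** ((B::real^'p^'n) - C) = A ** B - A ** C"
  by (vector matrix_matrix_mult_def sum_subtractf[symmetric] field_simps)

lemma matrix_diff_rdistrib: "((A::real^'n^'m) - B) ** (C::real^'p^'n) = A ** C - B ** C"
  by (vector matrix_matrix_mult_def sum_subtractf[symmetric] field_simps)

lemma transpose_add: "transpose ((A::real^'n^'m) + B) = transpose A + transpose B"
  by (simp add: transpose_def vec_eq_iff)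

lemma matrix_mul_sum_right: "(A::real^'n^'m) ** (\<Sum>k\<in>K. (F k::real^'p^'n)) = (\<Sum>k\<in>K. A ** F k)"
  by (induct K rule: infinite_finite_induct) (auto simp: matrix_add_ldistrib)

lemma matrix_mul_sum_left: "(\<Sum>k\<in>K. (F k::real^'n^'m)) ** (A::real^'p^'n) = (\<Sum>k\<in>K. F k ** A)"
  by (induct K rule: infinite_finite_induct) (auto simp: matrix_add_rdistrib)

lemma inner_matrix_vector_mult_transpose: "x \<bullet> ((A::real^'n^'m) *v y) = (transpose A *v x) \<bullet> y"
  by (simp add: dot_lmul_matrix)

lemma transpose_mul3:
  "transpose ((A::real^'n^'m) ** (B::real^'p^'n) ** (C::real^'q^'p)) = transpose C ** transpose B ** transpose A"
  by (simp add: matrix_transpose_mul matrix_mul_assoc)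

lemma matrix_inv_right_left:
  assumes "invertible (X::real^'n^'n)"
  shows matrix_inv_right: "X ** matrix_inv X = mat 1"
    and matrix_inv_left: "matrix_inv X ** X = mat 1"
proof -
  have "\<exists>X'. X ** X' = mat 1 \<and> X' ** X = mat 1" using assms invertible_def by blast
  hence "X ** matrix_inv X = mat 1 \<and> matrix_inv X ** X = mat 1"
    unfolding matrix_inv_def by (rule someI_ex)
  thus "X ** matrix_inv X = mat 1" "matrix_inv X ** X = mat 1" by auto
qed

lemma matrix_inv_unique_left:
  assumes "invertible (X::real^'n^'n)" "Y ** X = mat 1"
  shows "matrix_inv X = Y"
  by (metis assms matrix_inv_right matrix_mul_assoc matrix_mul_lid matrix_mul_rid)

lemma transpose_matrix_inv:
  assumes "invertible (X::real^'n^'n)"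
  shows "transpose (matrix_inv X) = matrix_inv (transpose X)"
proof -
  have "transpose (matrix_inv X) ** transpose X = mat 1"
    by (metis assms matrix_inv_right matrix_transpose_mul transpose_mat)
  thus ?thesis by (metis matrix_inv_unique_left transpose_invertible assms)
qed

lemma invertible_if_kernel_trivial:
  assumes "\<And>x. (X::real^'n^'n) *v x = 0 \<Longrightarrow> x = 0"
  shows "invertible X"
  using assms invertible_left_inverse matrix_left_invertible_ker by blast

lemma matrix_inv_push_through:
  fixes P S :: "real^'n^'n"
  assumes "invertible (mat 1 + P ** S)" and "invertible (mat 1 + S ** P)"
  shows "P ** matrix_inv (mat 1 + S ** P) = matrix_inv (mat 1 + P ** S) ** P"
proof -
  let ?Xi = "matrix_inv (mat 1 + P ** S)" and ?Zi = "matrix_inv (mat 1 + S ** P)"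
  have swap: "(mat 1 + P ** S) ** P = P ** (mat 1 + S ** P)"
    by (simp add: matrix_add_rdistrib matrix_add_ldistrib matrix_mul_assoc)
  have "P ** ?Zi = ?Xi ** ((mat 1 + P ** S) ** P) ** ?Zi"
    by (simp add: matrix_inv_left[OF assms(1)] matrix_mul_assoc)
  also have "\<dots> = ?Xi ** P ** ((mat 1 + S ** P) ** ?Zi)" by (simp add: swap matrix_mul_assoc)
  also have "\<dots> = ?Xi ** P" by (simp add: matrix_inv_right[OF assms(2)])
  finally show ?thesis .
qed

lemma psd_quadratic_form_eq_0:
  assumes "psd P" and "x \<bullet> ((P::real^'n^'n) *v x) = 0"
  shows "P *v x = 0"
proof (rule ccontr)
  assume "P *v x \<noteq> 0"
  define y a c where "y = P *v x" and "a = y \<bullet> y" and "c = y \<bullet> (P *v y)"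
  have a: "a > 0" using \<open>P *v x \<noteq> 0\<close> by (simp add: a_def y_def)
  have c: "c \<ge> 0" using assms(1) by (simp add: psd_def c_def)
  have sym: "x \<bullet> (P *v y) = y \<bullet> (P *v x)"
    using assms(1) by (metis inner_matrix_vector_mult_transpose inner_commute psd_def)
  \<comment> \<open>move from \<open>x\<close> in direction \<open>-y\<close>: the form decreases linearly but grows only quadratically\<close>
  define t where "t = - a / (c + 1)"
  have "0 \<le> (x + t *\<^sub>R y) \<bullet> (P *v (x + t *\<^sub>R y))" using assms(1) by (simp add: psd_def)
  also have "\<dots> = x \<bullet> (P *v x) + 2 * t * (y \<bullet> (P *v x)) + t * t * c"
    by (simp add: matrix_vector_right_distrib matrix_vector_mult_scaleR
        inner_add_left inner_add_right sym c_def inner_commute[of y "P *v x"] algebra_simps)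
  also have "\<dots> = t * (2 * a + t * c)" using assms(2) by (simp add: a_def y_def algebra_simps)
  finally have nonneg: "0 \<le> t * (2 * a + t * c)" .
  have "t < 0" and "t * c \<ge> - a" using a c by (simp_all add: t_def field_simps)
  hence "t * (2 * a + t * c) < 0" using a by (intro mult_neg_pos) linarith+
  thus False using nonneg by linarith
qed

lemma psd_add: "psd P \<Longrightarrow> psd Q \<Longrightarrow> psd (P + Q)"
  by (simp add: psd_def transpose_add matrix_vector_mult_add_rdistrib inner_add_right add_nonneg_nonneg)

lemma psd_congruence:
  fixes K :: "real^'m^'m" and A :: "real^'n^'m"
  assumes "psd K"
  shows "psd (transpose A ** K ** A)"
proof -
  have "x \<bullet> ((transpose A ** K ** A) *v x) = (A *v x) \<bullet> (K *v (A *v x))" for x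
    by (metis inner_matrix_vector_mult_transpose matrix_vector_mul_assoc transpose_transpose)
  thus ?thesis using assms by (simp add: psd_def transpose_mul3)
qed

lemma invertible_pd: "pd (R::real^'n^'n) \<Longrightarrow> invertible R"
  by (rule invertible_if_kernel_trivial) (metis pd_def inner_zero_right less_irrefl)

lemma psd_matrix_inv_pd:
  assumes "pd (R::real^'n^'n)"
  shows "psd (matrix_inv R)"
proof -
  have inv: "invertible R" using invertible_pd[OF assms] .
  have "transpose (matrix_inv R) = matrix_inv R"
    using assms by (simp add: transpose_matrix_inv[OF inv] pd_def)
  moreover have "0 \<le> x \<bullet> (matrix_inv R *v x)" for x
  proof -
    define y where "y = matrix_inv R *v x"
    have "x = R *v y" by (simp add: y_def matrix_vector_mul_assoc matrix_inv_right[OF inv])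
    hence "x \<bullet> (matrix_inv R *v x) = y \<bullet> (R *v y)" by (simp add: y_def inner_commute)
    thus ?thesis using assms by (cases "y = 0") (auto simp: pd_def less_imp_le)
  qed
  ultimately show ?thesis by (simp add: psd_def)
qed

lemma psd_SB: "pd R \<Longrightarrow> psd (SB R B)"
  using psd_congruence[OF psd_matrix_inv_pd, of R "transpose B"] by (simp add: SB_def)

lemma invertible_id_add_psd_mult:
  assumes S: "psd (S::real^'n^'n)" and P: "psd P"
  shows "invertible (mat 1 + S ** P)"
proof (rule invertible_if_kernel_trivial)
  fix x assume "(mat 1 + S ** P) *v x = 0"
  hence x: "x = - (S *v (P *v x))"
    by (simp add: matrix_vector_mult_add_rdistrib matrix_vector_mul_assoc[symmetric] eq_neg_iff_add_eq_0)
  have "x \<bullet> (P *v x) = - ((P *v x) \<bullet> (S *v (P *v x)))"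
    by (subst (1) x) (simp add: inner_commute)
  moreover have "0 \<le> (P *v x) \<bullet> (S *v (P *v x))" "0 \<le> x \<bullet> (P *v x)"
    using S P by (auto simp: psd_def)
  ultimately have "x \<bullet> (P *v x) = 0" by linarith
  hence "P *v x = 0" by (rule psd_quadratic_form_eq_0[OF P])
  thus "x = 0" using x by simp
qed

lemma invertible_id_add_psd_mult':
  assumes "psd (S::real^'n^'n)" and "psd P"
  shows "invertible (mat 1 + P ** S)"
proof -
  have "transpose (mat 1 + S ** P) = mat 1 + P ** S"
    using assms by (simp add: transpose_add matrix_transpose_mul psd_def)
  thus ?thesis using transpose_invertible[OF invertible_id_add_psd_mult[OF assms]] by simp
qed

lemma transpose_inv_id_add_psd_mult:
  assumes "psd (S::real^'n^'n)" and "psd P"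
  shows "transpose (matrix_inv (mat 1 + S ** P)) = matrix_inv (mat 1 + P ** S)"
  using assms by (simp add: transpose_matrix_inv[OF invertible_id_add_psd_mult[OF assms]]
      transpose_add matrix_transpose_mul psd_def)

lemma psd_mult_inv_id_add_psd_mult:
  assumes S: "psd (S::real^'n^'n)" and P: "psd P"
  shows "psd (P ** matrix_inv (mat 1 + S ** P))"
proof -
  let ?Zi = "matrix_inv (mat 1 + S ** P)"
  have inv: "invertible (mat 1 + S ** P)" using invertible_id_add_psd_mult[OF S P] .
  have "transpose (P ** ?Zi) = matrix_inv (mat 1 + P ** S) ** P"
    using P by (simp add: matrix_transpose_mul transpose_inv_id_add_psd_mult[OF S P] psd_def)
  also have "\<dots> = P ** ?Zi"
    using matrix_inv_push_through[OF invertible_id_add_psd_mult'[OF S P] inv] by simp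
  finally have "transpose (P ** ?Zi) = P ** ?Zi" .
  moreover have "0 \<le> z \<bullet> ((P ** ?Zi) *v z)" for z
  proof -
    \<comment> \<open>substitute \<open>z = (I + S P) y\<close>, which turns the form into \<open>y\<^sup>TPy + (Py)\<^sup>TS(Py)\<close>\<close>
    define y where "y = ?Zi *v z"
    have "y + S *v (P *v y) = (mat 1 + S ** P) *v y"
      by (simp add: matrix_vector_mult_add_rdistrib matrix_vector_mul_assoc)
    also have "\<dots> = z" by (simp add: y_def matrix_vector_mul_assoc matrix_inv_right[OF inv])
    finally have z: "z = y + S *v (P *v y)" by simp
    have "z \<bullet> ((P ** ?Zi) *v z) = y \<bullet> (P *v y) + (P *v y) \<bullet> (S *v (P *v y))"
      by (simp add: y_def[symmetric] matrix_vector_mul_assoc[symmetric], subst (1) z)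
        (simp add: inner_add_right inner_commute[of _ "P *v y"])
    thus ?thesis using P S by (simp add: psd_def)
  qed
  ultimately show ?thesis by (simp add: psd_def)
qed

lemma psd_ric:
  assumes "pd R" and "psd Q" and "psd P"
  shows "psd (ric R Q A B P)"
proof -
  have "psd (P ** matrix_inv (mat 1 + SB R B ** P))"
    using psd_mult_inv_id_add_psd_mult[OF psd_SB[OF assms(1)] assms(3)] .
  from psd_add[OF psd_congruence[OF this, of A] assms(2)] show ?thesis
    by (simp add: ric_def matrix_mul_assoc)
qed

lemma psd_ric_iter:
  assumes "pd R" and "psd Q" and "psd P"
  shows "psd (ric_iter R Q A B k P)"
  by (induct k) (auto simp: ric_iter_def assms psd_ric)

lemma resolvent_difference_split:
  fixes Xi Yi Ph P Ss Sh :: "real^'n^'n"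
  assumes X: "Xi ** (mat 1 + Ph ** Sh) = mat 1"
    and Y: "(mat 1 + Ss ** P) ** Yi = mat 1"
  shows "Xi ** Ph = Xi ** (Ph - P) ** (mat 1 + (Ss - Sh) ** P) ** Yi + P ** Yi
                  + Xi ** P ** (Ss - Sh) ** P ** Yi"
proof -
  let ?X = "mat 1 + Ph ** Sh" and ?Y = "mat 1 + Ss ** P" and ?W = "mat 1 + (Ss - Sh) ** P"
  have P_Yi: "P ** Yi = Xi ** (?X ** P) ** Yi"
    by (metis X matrix_mul_assoc matrix_mul_lid)
  have poly: "(Ph - P) ** ?W + ?X ** P + P ** (Ss - Sh) ** P = Ph ** ?Y"
    by (simp add: matrix_add_ldistrib matrix_add_rdistrib matrix_diff_ldistrib
        matrix_diff_rdistrib matrix_mul_assoc algebra_simps)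
  have "Xi ** (Ph - P) ** ?W ** Yi + P ** Yi + Xi ** P ** (Ss - Sh) ** P ** Yi
      = Xi ** ((Ph - P) ** ?W + ?X ** P + P ** (Ss - Sh) ** P) ** Yi"
    unfolding P_Yi by (simp only: matrix_add_ldistrib matrix_add_rdistrib matrix_mul_assoc)
  also have "\<dots> = Xi ** Ph ** (?Y ** Yi)" unfolding poly by (simp add: matrix_mul_assoc)
  finally show ?thesis by (simp add: Y)
qed

lemma ric_diff_step:
  assumes R: "pd R" and Ph: "psd Ph" and P: "psd P"
  shows "ric R Q Ah Bh Ph - ric R Q As Bs P
       = transpose (Lcl R Ah Bh Ph) ** (Ph - P) ** Lbar R As Bs Ah Bh P + Mm R As Bs Ah Bh Ph P"
proof -
  let ?Sh = "SB R Bh" and ?Ss = "SB R Bs"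
  let ?Xi = "matrix_inv (mat 1 + Ph ** ?Sh)" and ?Yi = "matrix_inv (mat 1 + ?Ss ** P)"
    and ?W = "mat 1 + (?Ss - ?Sh) ** P"
  have Sh: "psd ?Sh" and Ss: "psd ?Ss" using psd_SB[OF R] by auto
  have L: "transpose (Lcl R Ah Bh Ph) = transpose Ah ** ?Xi"
    by (simp add: Lcl_def matrix_transpose_mul transpose_inv_id_add_psd_mult[OF Sh Ph])
  have Lbar: "Lbar R As Bs Ah Bh P = ?W ** ?Yi ** Ah"
    by (simp add: Lbar_def Wm_def Hm_def Lcl_def matrix_diff_ldistrib matrix_mul_assoc)
  have "ric R Q Ah Bh Ph = transpose Ah ** ?Xi ** Ph ** Ah + Q"
    by (simp add: ric_def matrix_mul_assoc[symmetric] matrix_inv_push_through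
        invertible_id_add_psd_mult'[OF Sh Ph] invertible_id_add_psd_mult[OF Sh Ph])
  hence ric_hat: "ric R Q Ah Bh Ph = transpose Ah ** (?Xi ** Ph) ** Ah + Q"
    by (simp add: matrix_mul_assoc)
  have split: "?Xi ** Ph = ?Xi ** (Ph - P) ** ?W ** ?Yi + P ** ?Yi + ?Xi ** P ** (?Ss - ?Sh) ** P ** ?Yi"
    by (rule resolvent_difference_split[OF matrix_inv_left matrix_inv_right])
      (auto intro: invertible_id_add_psd_mult invertible_id_add_psd_mult' Sh Ss Ph P)
  show ?thesis
    unfolding ric_hat split L Lbar
    by (simp add: ric_def Mm_def matrix_add_ldistrib matrix_add_rdistrib matrix_mul_assoc)
qed

lemma foldr_matrix_mul_right:
  "foldr (\<lambda>k M. f k ** M) xs (B::real^'n^'n) = foldr (\<lambda>k M. f k ** M) xs (mat 1) ** B"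
  by (induct xs) (auto simp: matrix_mul_assoc)

lemma mprod_empty [simp]: "mprod f i i = mat 1"
  by (simp add: mprod_def)

lemma mprod_Suc_right: "j \<le> i \<Longrightarrow> mprod f j (Suc i) = mprod f j i ** (f i :: real^'n^'n)"
  unfolding mprod_def by (simp add: foldr_matrix_mul_right[of f _ "f i"])

lemma congruence_recursion_unroll:
  fixes D M f g :: "nat \<Rightarrow> real^'n^'n"
  assumes rec: "\<And>k. D (Suc k) = transpose (f k) ** D k ** g k + M k"
  shows "D i = transpose (mprod f 0 i) ** D 0 ** mprod g 0 i
     + (\<Sum>k<i. transpose (mprod f (Suc k) i) ** M k ** mprod g (Suc k) i)"
proof (induct i)
  case 0 then show ?case by simp
next
  case (Suc i)
  have "(\<Sum>k<i. transpose (mprod f (Suc k) (Suc i)) ** M k ** mprod g (Suc k) (Suc i))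
      = (\<Sum>k<i. transpose (f i) ** (transpose (mprod f (Suc k) i) ** M k ** mprod g (Suc k) i) ** g i)"
    by (rule sum.cong) (auto simp: mprod_Suc_right matrix_transpose_mul matrix_mul_assoc)
  moreover have "D (Suc i) = transpose (f i) ** (transpose (mprod f 0 i) ** D 0 ** mprod g 0 i) ** g i
     + (\<Sum>k<i. transpose (f i) ** (transpose (mprod f (Suc k) i) ** M k ** mprod g (Suc k) i) ** g i) + M i"
    by (simp only: rec Suc matrix_add_ldistrib matrix_add_rdistrib matrix_mul_sum_right matrix_mul_sum_left)
  ultimately show ?case
    by (simp add: mprod_Suc_right matrix_transpose_mul matrix_mul_assoc)
qed

theorem lemma3:
  fixes R :: "real^'m^'m" and Q :: "real^'n^'n"
    and As Ah :: "real^'n^'n" and Bs Bh :: "real^'m^'n"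
    and P1 P2 :: "real^'n^'n" and i :: nat
  assumes "pd R" and "psd Q" and "psd P1" and "psd P2"
  shows "ric_iter R Q Ah Bh i P1 - ric_iter R Q As Bs i P2 =
      transpose (Phi R Q Ah Bh 0 i P1) ** (P1 - P2) ** Phibar R Q As Bs Ah Bh 0 i P2
    + (\<Sum>j\<in>{1..i}. transpose (Phi R Q Ah Bh (i - j + 1) i P1)
         ** Mm R As Bs Ah Bh (ric_iter R Q Ah Bh (i - j) P1) (ric_iter R Q As Bs (i - j) P2)
         ** Phibar R Q As Bs Ah Bh (i - j + 1) i P2)"
proof -
  let ?Ph = "\<lambda>k. ric_iter R Q Ah Bh k P1" and ?P = "\<lambda>k. ric_iter R Q As Bs k P2"
  let ?f = "\<lambda>k. Lcl R Ah Bh (?Ph k)" and ?g = "\<lambda>k. Lbar R As Bs Ah Bh (?P k)"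
  let ?M = "\<lambda>k. Mm R As Bs Ah Bh (?Ph k) (?P k)"
  let ?F = "\<lambda>k. transpose (mprod ?f (Suc k) i) ** ?M k ** mprod ?g (Suc k) i"
  have "?Ph (Suc k) - ?P (Suc k) = transpose (?f k) ** (?Ph k - ?P k) ** ?g k + ?M k" for k
    using ric_diff_step[OF assms(1) psd_ric_iter[OF assms(1,2,3)] psd_ric_iter[OF assms(1,2,4)]]
    by (simp add: ric_iter_def)
  from congruence_recursion_unroll[of "\<lambda>k. ?Ph k - ?P k", OF this]
  have unrolled: "?Ph i - ?P i = transpose (mprod ?f 0 i) ** (P1 - P2) ** mprod ?g 0 i + (\<Sum>k<i. ?F k)"
    by (simp add: ric_iter_def)
  have "(\<Sum>j\<in>{1..i}. ?F (i - j)) = (\<Sum>k<i. ?F (i - Suc k))"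
    using sum.atLeast1_atMost_eq[of "\<lambda>j. ?F (i - j)" i] by simp
  also have "\<dots> = (\<Sum>k<i. ?F k)" by (rule sum.nat_diff_reindex)
  finally show ?thesis
    unfolding Phi_def Phibar_def using unrolled by simp
qed

end
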